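(* There exists a Heffter array $H(n;k)$ for all $n\equiv 1\pmod 4$ and $k\equiv 1\pmod 4$ with $5\le k<n$.
   Context: A Heffter array $H(n;k)$ is an $n\times n$ array in which some cells are filled with nonzero integers and the others are empty, such that: each row and each column contains exactly $k$ filled cells; the entries of every row and of every column sum to $0$ modulo $2nk+1$; and for each integer $1\le x\le nk$, exactly one of $x$ or $-x$ appears in the array, and it appears exactly once. *)

theory Defs
  imports Main
begin

text \<open>An n x n partially filled array: cell (i,j) with i,j < n is empty (None)
  or holds an integer. Cells outside the range are ignored.\<close>

definition filled_row :: "(nat \<Rightarrow> nat \<Rightarrow> int option) \<Rightarrow> nat \<Rightarrow> nat \<Rightarrow> nat set" where
  "filled_row A n i = {j. j < n \<and> A i j \<noteq> None}"

definition filled_col :: "(nat \<Rightarrow> nat \<Rightarrow> int option) \<Rightarrow> nat \<Rightarrow> nat \<Rightarrow> nat set" where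
  "filled_col A n j = {i. i < n \<and> A i j \<noteq> None}"

definition heffter :: "nat \<Rightarrow> nat \<Rightarrow> (nat \<Rightarrow> nat \<Rightarrow> int option) \<Rightarrow> bool" where
  "heffter n k A \<longleftrightarrow>
     (\<forall>i<n. \<forall>j<n. A i j \<noteq> Some 0) \<and>
     (\<forall>i<n. card (filled_row A n i) = k) \<and>
     (\<forall>j<n. card (filled_col A n j) = k) \<and>
     (\<forall>i<n. (\<Sum>j\<in>filled_row A n i. the (A i j)) mod (2 * int n * int k + 1) = 0) \<and>
     (\<forall>j<n. (\<Sum>i\<in>filled_col A n j. the (A i j)) mod (2 * int n * int k + 1) = 0) \<and>
     (\<forall>i<n. \<forall>j<n. \<forall>v. A i j = Some v \<longrightarrow> 1 \<le> \<bar>v\<bar> \<and> \<bar>v\<bar> \<le> int (n * k)) \<and>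
     (\<forall>x::int. 1 \<le> x \<and> x \<le> int (n * k) \<longrightarrow>
        (\<exists>!p. p \<in> {0..<n} \<times> {0..<n} \<and>
               (A (fst p) (snd p) = Some x \<or> A (fst p) (snd p) = Some (-x))))"

end

theory Submission
  imports Defs
begin

text \<open>The array is supported on \<open>k\<close> consecutive cyclic diagonals: the cell in row \<open>i\<close> on
  diagonal \<open>t\<close> (column \<open>i + t mod n\<close>) holds an entry \<open>E(i, t)\<close>. The absolute values on
  diagonal \<open>t\<close> run exactly once through the block \<open>n\<cdot>b(t) + 1, \<dots>, n\<cdot>b(t) + n\<close>, where \<open>b\<close>
  permutes \<open>{0, \<dots>, k - 1}\<close>, so every \<open>1 \<le> x \<le> nk\<close> occurs once up to sign. Diagonals
  \<open>5, \<dots>, k - 1\<close> come in groups of four with entries \<open>a + i, -(a + n + i), -(a + 2n + i + 2),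
  a + 3n + i + 2\<close>, which cancel both along rows and along columns. The first five diagonals
  are chosen, using halving modulo the odd number \<open>n\<close>, so that each of their row and column
  sums is \<open>2nk + 1\<close> or \<open>0\<close>.\<close>

lemma cyclic_diff_add:
  fixes i t n :: nat assumes "i < n" "t < n" shows "((i + t) mod n + n - i) mod n = t"
proof (cases "i + t < n")
  case False
  hence "(i + t) mod n = i + t - n" using assms by (simp add: mod_if)
  thus ?thesis using False assms by simp
qed (use assms in \<open>simp add: add.commute\<close>)

lemma cyclic_add_diff:
  fixes i j n :: nat assumes "i < n" "j < n" shows "(i + (j + n - i) mod n) mod n = j"
proof (cases "j < i")
  case True
  hence "i + (j + n - i) mod n = j + n" using assms by simp
  thus ?thesis using assms by simp
next
  case False
  hence "(j + n - i) mod n = j - i" using assms by (simp add: mod_if)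
  thus ?thesis using False assms by simp
qed

lemma cyclic_diff_sub:
  fixes j t n :: nat assumes "j < n" "t < n" shows "(j + n - (j + n - t) mod n) mod n = t"
proof (cases "j < t")
  case False
  hence "(j + n - t) mod n = j - t" using assms by (simp add: mod_if)
  thus ?thesis using False assms by simp
qed (use assms in simp)

lemma inj_on_cyclic_add:
  fixes i n k :: nat assumes "i < n" "k \<le> n" shows "inj_on (\<lambda>t. (i + t) mod n) {..<k}"
proof (rule inj_onI)
  fix t t' assume t: "t \<in> {..<k}" "t' \<in> {..<k}" and eq: "(i + t) mod n = (i + t') mod n"
  have "t = ((i + t) mod n + n - i) mod n" using cyclic_diff_add[OF assms(1), of t] t assms by simp
  also have "\<dots> = t'" unfolding eq using cyclic_diff_add[OF assms(1), of t'] t assms by simp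
  finally show "t = t'" .
qed

lemma inj_on_cyclic_sub:
  fixes j n k :: nat assumes "j < n" "k \<le> n" shows "inj_on (\<lambda>t. (j + n - t) mod n) {..<k}"
proof (rule inj_onI)
  fix t t' assume t: "t \<in> {..<k}" "t' \<in> {..<k}" and eq: "(j + n - t) mod n = (j + n - t') mod n"
  have "t = (j + n - (j + n - t) mod n) mod n" using cyclic_diff_sub[OF assms(1), of t] t assms by simp
  also have "\<dots> = t'" unfolding eq using cyclic_diff_sub[OF assms(1), of t'] t assms by simp
  finally show "t = t'" .
qed

definition diagonal_array :: "nat \<Rightarrow> nat \<Rightarrow> (int \<Rightarrow> nat \<Rightarrow> int) \<Rightarrow> nat \<Rightarrow> nat \<Rightarrow> int option" where
  "diagonal_array n k E i j =
     (if (j + n - i) mod n < k then Some (E (int i) ((j + n - i) mod n)) else None)"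

lemma diagonal_array_Some_iff:
  assumes "i < n" "j < n" "k \<le> n"
  shows "diagonal_array n k E i j = Some v \<longleftrightarrow> (\<exists>t<k. j = (i + t) mod n \<and> v = E (int i) t)"
proof
  assume "diagonal_array n k E i j = Some v"
  thus "\<exists>t<k. j = (i + t) mod n \<and> v = E (int i) t"
    using cyclic_add_diff[OF assms(1,2)] unfolding diagonal_array_def by (auto split: if_splits)
next
  assume "\<exists>t<k. j = (i + t) mod n \<and> v = E (int i) t"
  then obtain t where t: "t < k" "j = (i + t) mod n" "v = E (int i) t" by blast
  hence "(j + n - i) mod n = t" using cyclic_diff_add[OF assms(1), of t] assms(3) by simp
  thus "diagonal_array n k E i j = Some v" unfolding diagonal_array_def using t by simp
qed

lemma diagonal_array_not_None_iff:
  assumes "i < n" "j < n" "k \<le> n"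
  shows "diagonal_array n k E i j \<noteq> None \<longleftrightarrow> (\<exists>t<k. j = (i + t) mod n)"
  unfolding not_None_eq diagonal_array_Some_iff[OF assms] by blast

lemma filled_row_diagonal_array:
  assumes "i < n" "k \<le> n"
  shows "filled_row (diagonal_array n k E) n i = (\<lambda>t. (i + t) mod n) ` {..<k}"
  using assms diagonal_array_not_None_iff[OF assms(1) _ assms(2)]
  unfolding filled_row_def by auto

lemma filled_col_diagonal_array:
  assumes "j < n" "k \<le> n"
  shows "filled_col (diagonal_array n k E) n j = (\<lambda>t. (j + n - t) mod n) ` {..<k}"
proof -
  have mem: "i \<in> filled_col (diagonal_array n k E) n j \<longleftrightarrow> i < n \<and> (j + n - i) mod n < k" for i
    unfolding filled_col_def diagonal_array_def by auto
  show ?thesis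
  proof (intro set_eqI iffI)
    fix i assume "i \<in> filled_col (diagonal_array n k E) n j"
    hence "i < n" "(j + n - i) mod n < k" using mem by auto
    thus "i \<in> (\<lambda>t. (j + n - t) mod n) ` {..<k}"
      using cyclic_diff_sub[OF assms(1), of i] by (intro image_eqI[of _ _ "(j + n - i) mod n"]) auto
  next
    fix i assume "i \<in> (\<lambda>t. (j + n - t) mod n) ` {..<k}"
    then obtain t where "t < k" "i = (j + n - t) mod n" by auto
    thus "i \<in> filled_col (diagonal_array n k E) n j"
      using mem cyclic_diff_sub[OF assms(1), of t] assms by auto
  qed
qed

lemma row_sum_diagonal_array:
  assumes "i < n" "k \<le> n"
  shows "(\<Sum>j\<in>filled_row (diagonal_array n k E) n i. the (diagonal_array n k E i j))
           = (\<Sum>t<k. E (int i) t)"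
proof -
  have "(\<Sum>j\<in>filled_row (diagonal_array n k E) n i. the (diagonal_array n k E i j))
          = (\<Sum>t<k. the (diagonal_array n k E i ((i + t) mod n)))"
    unfolding filled_row_diagonal_array[OF assms]
    by (simp add: sum.reindex[OF inj_on_cyclic_add[OF assms]])
  also have "\<dots> = (\<Sum>t<k. E (int i) t)"
    using assms by (intro sum.cong) (auto simp: diagonal_array_def cyclic_diff_add)
  finally show ?thesis .
qed

lemma col_sum_diagonal_array:
  assumes "j < n" "k \<le> n" and periodic: "\<And>i t. E (i mod int n) t = E i t"
  shows "(\<Sum>i\<in>filled_col (diagonal_array n k E) n j. the (diagonal_array n k E i j))
           = (\<Sum>t<k. E (int j - int t) t)"
proof -
  have "(\<Sum>i\<in>filled_col (diagonal_array n k E) n j. the (diagonal_array n k E i j))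
          = (\<Sum>t<k. the (diagonal_array n k E ((j + n - t) mod n) j))"
    unfolding filled_col_diagonal_array[OF assms(1,2)]
    by (simp add: sum.reindex[OF inj_on_cyclic_sub[OF assms(1,2)]])
  also have "\<dots> = (\<Sum>t<k. E (int j - int t) t)"
  proof (rule sum.cong)
    fix t assume "t \<in> {..<k}"
    hence t: "t < n" using assms by simp
    have "int ((j + n - t) mod n) = (int j + int n - int t) mod int n"
      using t by (simp add: of_nat_mod)
    also have "\<dots> = (int j - int t) mod int n" by (metis diff_add_eq mod_add_self2)
    finally have "int ((j + n - t) mod n) = (int j - int t) mod int n" .
    thus "the (diagonal_array n k E ((j + n - t) mod n) j) = E (int j - int t) t"
      using \<open>t \<in> {..<k}\<close> cyclic_diff_sub[OF assms(1) t] periodic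
      unfolding diagonal_array_def by simp
  qed simp
  finally show ?thesis .
qed

lemma diagonal_array_entry_bounds:
  assumes "k \<le> n"
    and bij: "bij_betw (\<lambda>(i, t). \<bar>E (int i) t\<bar>) ({..<n} \<times> {..<k}) {1..int (n * k)}"
    and cell: "i < n" "j < n" "diagonal_array n k E i j = Some v"
  shows "1 \<le> \<bar>v\<bar> \<and> \<bar>v\<bar> \<le> int (n * k)"
proof -
  obtain t where "t < k" "v = E (int i) t"
    using cell diagonal_array_Some_iff[OF cell(1,2) assms(1)] by blast
  thus ?thesis using bij_betw_apply[OF bij, of "(i, t)"] \<open>i < n\<close> by simp
qed

lemma diagonal_array_unique_cell:
  assumes "k \<le> n"
    and bij: "bij_betw (\<lambda>(i, t). \<bar>E (int i) t\<bar>) ({..<n} \<times> {..<k}) {1..int (n * k)}"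
    and x_range: "1 \<le> x \<and> x \<le> int (n * k)"
  shows "\<exists>!p. p \<in> {0..<n} \<times> {0..<n} \<and> (diagonal_array n k E (fst p) (snd p) = Some x
                                          \<or> diagonal_array n k E (fst p) (snd p) = Some (-x))"
proof -
  let ?A = "diagonal_array n k E"
  have "x \<in> (\<lambda>(i, t). \<bar>E (int i) t\<bar>) ` ({..<n} \<times> {..<k})"
    using bij_betw_imp_surj_on[OF bij] x_range by simp
  then obtain i t where it: "i < n" "t < k" "\<bar>E (int i) t\<bar> = x" by auto
  have j: "(i + t) mod n < n" using it(1) by simp
  have "?A i ((i + t) mod n) = Some (E (int i) t)"
    using diagonal_array_Some_iff[OF it(1) j assms(1)] it(2) by blast
  moreover have "E (int i) t = x \<or> E (int i) t = - x" using it(3) by linarith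
  ultimately have holds: "?A i ((i + t) mod n) = Some x \<or> ?A i ((i + t) mod n) = Some (-x)" by auto
  have unique: "(a, b) = (i, (i + t) mod n)"
    if cell: "a < n" "b < n" "?A a b = Some x \<or> ?A a b = Some (-x)" for a b
  proof -
    obtain y where y: "?A a b = Some y" "\<bar>y\<bar> = x" using cell(3) x_range by (elim disjE) auto
    then obtain t' where t': "t' < k" "b = (a + t') mod n" "y = E (int a) t'"
      using diagonal_array_Some_iff[OF cell(1,2) assms(1)] by blast
    have "(a, t') = (i, t)"
      using inj_onD[OF bij_betw_imp_inj_on[OF bij], of "(a, t')" "(i, t)"] it cell(1) t' y(2) by simp
    thus ?thesis using t'(2) by simp
  qed
  show ?thesis
  proof (rule ex1I[of _ "(i, (i + t) mod n)"])
    show "(i, (i + t) mod n) \<in> {0..<n} \<times> {0..<n}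
            \<and> (?A (fst (i, (i + t) mod n)) (snd (i, (i + t) mod n)) = Some x
               \<or> ?A (fst (i, (i + t) mod n)) (snd (i, (i + t) mod n)) = Some (-x))"
      using it(1) j holds by simp
  next
    fix p assume p: "p \<in> {0..<n} \<times> {0..<n} \<and> (?A (fst p) (snd p) = Some x \<or> ?A (fst p) (snd p) = Some (-x))"
    obtain a b where "p = (a, b)" by (cases p)
    with p show "p = (i, (i + t) mod n)" using unique[of a b] by simp
  qed
qed

text \<open>Row indices are passed to \<open>E\<close> as integers, so that the column condition can be stated
  with row index \<open>j - t\<close>; the periodicity hypothesis makes this independent of representatives.\<close>

lemma heffter_diagonal_array:
  fixes E :: "int \<Rightarrow> nat \<Rightarrow> int"
  assumes "k \<le> n"
    and periodic: "\<And>i t. E (i mod int n) t = E i t"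
    and bij: "bij_betw (\<lambda>(i, t). \<bar>E (int i) t\<bar>) ({..<n} \<times> {..<k}) {1..int (n * k)}"
    and rows: "\<And>i. i < n \<Longrightarrow> (\<Sum>t<k. E (int i) t) mod (2 * int n * int k + 1) = 0"
    and cols: "\<And>j. j < n \<Longrightarrow> (\<Sum>t<k. E (int j - int t) t) mod (2 * int n * int k + 1) = 0"
  shows "heffter n k (diagonal_array n k E)"
proof -
  let ?A = "diagonal_array n k E"
  note entry_bounds = diagonal_array_entry_bounds[OF assms(1) bij]
  have "\<forall>i<n. \<forall>j<n. ?A i j \<noteq> Some 0"
    using entry_bounds[of _ _ 0] by fastforce
  moreover have "\<forall>i<n. card (filled_row ?A n i) = k"
    using assms(1) by (simp add: filled_row_diagonal_array card_image[OF inj_on_cyclic_add])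
  moreover have "\<forall>j<n. card (filled_col ?A n j) = k"
    using assms(1) by (simp add: filled_col_diagonal_array card_image[OF inj_on_cyclic_sub])
  moreover have "\<forall>i<n. (\<Sum>j\<in>filled_row ?A n i. the (?A i j)) mod (2 * int n * int k + 1) = 0"
    using assms(1) rows by (simp add: row_sum_diagonal_array)
  moreover have "\<forall>j<n. (\<Sum>i\<in>filled_col ?A n j. the (?A i j)) mod (2 * int n * int k + 1) = 0"
    using assms(1) cols by (simp add: col_sum_diagonal_array periodic)
  moreover have "\<forall>i<n. \<forall>j<n. \<forall>v. ?A i j = Some v \<longrightarrow> 1 \<le> \<bar>v\<bar> \<and> \<bar>v\<bar> \<le> int (n * k)"
    by (intro allI impI) (fact entry_bounds)
  moreover have "\<forall>x::int. 1 \<le> x \<and> x \<le> int (n * k) \<longrightarrow>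
      (\<exists>!p. p \<in> {0..<n} \<times> {0..<n} \<and> (?A (fst p) (snd p) = Some x \<or> ?A (fst p) (snd p) = Some (-x)))"
    by (intro allI impI) (fact diagonal_array_unique_cell[OF assms(1) bij])
  ultimately show ?thesis unfolding heffter_def by (intro conjI)
qed

lemma bij_betw_blocks:
  fixes f :: "nat \<times> nat \<Rightarrow> int" and b :: "nat \<Rightarrow> nat"
  assumes b: "inj_on b {..<k}" "\<And>t. t < k \<Longrightarrow> b t < k"
    and block: "\<And>i t. i < n \<Longrightarrow> t < k \<Longrightarrow>
                  int n * int (b t) + 1 \<le> f (i, t) \<and> f (i, t) \<le> int n * int (b t) + int n"
    and inj: "\<And>t. t < k \<Longrightarrow> inj_on (\<lambda>i. f (i, t)) {..<n}"
  shows "bij_betw f ({..<n} \<times> {..<k}) {1..int (n * k)}"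
proof -
  have block_index: "(f (i, t) - 1) div int n = int (b t)" if "i < n" "t < k" for i t
    by (rule int_div_pos_eq[of _ _ _ "f (i, t) - 1 - int n * int (b t)"]) (use block[OF that] in auto)
  have "inj_on f ({..<n} \<times> {..<k})"
  proof (rule inj_onI, clarsimp)
    fix i t i' t' assume *: "i < n" "t < k" "i' < n" "t' < k" and eq: "f (i, t) = f (i', t')"
    have "t = t'" using block_index[of i t] block_index[of i' t'] * eq inj_onD[OF b(1)] by simp
    thus "i = i' \<and> t = t'" using inj_onD[OF inj] * eq by blast
  qed
  moreover have "f ` ({..<n} \<times> {..<k}) \<subseteq> {1..int (n * k)}"
  proof clarsimp
    fix i t assume "i < n" "t < k"
    have "int n * (int (b t) + 1) \<le> int n * int k" using b(2)[OF \<open>t < k\<close>] by (intro mult_left_mono) auto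
    moreover have "0 \<le> int n * int (b t)" by simp
    ultimately show "1 \<le> f (i, t) \<and> f (i, t) \<le> int n * int k"
      using block[OF \<open>i < n\<close> \<open>t < k\<close>] unfolding distrib_left by linarith
  qed
  moreover have "card ({..<n} \<times> {..<k}) = card {1..int (n * k)}"
    by (simp add: card_cartesian_product nat_mult_distrib)
  ultimately show ?thesis by (simp add: bij_betw_def card_image card_subset_eq)
qed

definition half :: "nat \<Rightarrow> int" where
  "half n = (int n - 1) div 2"

definition halve :: "nat \<Rightarrow> int \<Rightarrow> int" where
  "halve n y = ((half n + 1) * y) mod int n"

lemma odd_eq_double_half: "odd n \<Longrightarrow> int n = 2 * half n + 1"
  by (auto simp: half_def elim: oddE)

lemma halve_mod: "halve n (y mod int n) = halve n y"
  unfolding halve_def by (simp add: mod_mult_right_eq)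

lemma halve_bounds: "0 < n \<Longrightarrow> 0 \<le> halve n y \<and> halve n y < int n"
  unfolding halve_def by simp

lemma double_halve_mod:
  assumes "odd n" shows "(2 * halve n y) mod int n = y mod int n"
proof -
  have "(2 * halve n y) mod int n = (2 * ((half n + 1) * y)) mod int n"
    unfolding halve_def by (simp add: mod_mult_right_eq)
  also have "2 * ((half n + 1) * y) = y + int n * y"
    using odd_eq_double_half[OF assms] by (simp add: algebra_simps)
  finally show ?thesis by simp
qed

lemma halve_add_two:
  assumes "odd n" shows "halve n (y + 2) = (halve n y + 1) mod int n"
proof -
  have "(half n + 1) * (y + 2) = ((half n + 1) * y + 1) + int n"
    using odd_eq_double_half[OF assms] by (simp add: algebra_simps)
  thus ?thesis unfolding halve_def by (simp add: mod_add_left_eq)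
qed

lemma neg_mod_eq_halve:
  assumes "odd n" shows "(- (y + c)) mod int n = (- 2 * halve n y - c) mod int n"
proof -
  have "(- 2 * halve n y - c) mod int n = (- ((2 * halve n y) mod int n) - c) mod int n"
    by (metis minus_mult_left mod_diff_left_eq mod_minus_eq)
  also have "\<dots> = (- y - c) mod int n"
    unfolding double_halve_mod[OF assms] by (metis mod_diff_left_eq mod_minus_eq)
  finally show ?thesis by (metis minus_add_distrib diff_conv_add_uminus)
qed

lemma halve_add_inj:
  assumes "odd n" "0 \<le> i" "i < int n" "0 \<le> i'" "i' < int n" and "halve n (i + c) = halve n (i' + c)"
  shows "i = i'"
proof -
  have "(i + c) mod int n = (i' + c) mod int n"
    using double_halve_mod[OF assms(1), of "i + c"] double_halve_mod[OF assms(1), of "i' + c"] assms(6)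
    by simp
  hence "((i + c) - c) mod int n = ((i' + c) - c) mod int n" by (rule mod_diff_cong) simp
  thus ?thesis using assms by simp
qed

lemma mod_eq_add_multiple:
  fixes y c N :: int assumes "0 \<le> y + c * N" "y + c * N < N" shows "y mod N = y + c * N"
  using int_mod_pos_eq[of y N "- c" "y + c * N"] assms by simp

context
  fixes N h x :: int
  assumes N: "N = 2 * h + 1" and h: "1 \<le> h" and x: "0 \<le> x" "x < N"
begin

lemma succ_mod_cases: "(x + 1) mod N = (if x < 2 * h then x + 1 else 0)"
proof (cases "x < 2 * h")
  case True thus ?thesis using mod_eq_add_multiple[of "x + 1" 0 N] N x by simp
next
  case False thus ?thesis using mod_eq_add_multiple[of "x + 1" "-1" N] N x by simp
qed

lemma neg_double_minus_two_mod_cases: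
  "(- 2 * x - 2) mod N = (if x < h then N - 2 * x - 2 else 2 * N - 2 * x - 2)"
proof (cases "x < h")
  case True thus ?thesis using mod_eq_add_multiple[of "- 2 * x - 2" 1 N] N x by simp
next
  case False thus ?thesis using mod_eq_add_multiple[of "- 2 * x - 2" 2 N] N x by simp
qed

lemma neg_double_minus_three_mod_cases:
  "(- 2 * x - 3) mod N =
     (if x < h then N - 2 * x - 3 else if x < 2 * h then 2 * N - 2 * x - 3 else 3 * N - 2 * x - 3)"
proof -
  consider "x < h" | "h \<le> x" "x < 2 * h" | "2 * h \<le> x" by linarith
  thus ?thesis
  proof cases
    case 1 thus ?thesis using mod_eq_add_multiple[of "- 2 * x - 3" 1 N] N x by simp
  next
    case 2 thus ?thesis using mod_eq_add_multiple[of "- 2 * x - 3" 2 N] N x by simp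
  next
    case 3 thus ?thesis using mod_eq_add_multiple[of "- 2 * x - 3" 3 N] N h x by simp
  qed
qed

lemma neg_double_minus_one_mod_cases:
  "(- 2 * x - 1) mod N = (if x \<le> h then N - 2 * x - 1 else 2 * N - 2 * x - 1)"
proof (cases "x \<le> h")
  case True thus ?thesis using mod_eq_add_multiple[of "- 2 * x - 1" 1 N] N x by simp
next
  case False thus ?thesis using mod_eq_add_multiple[of "- 2 * x - 1" 2 N] N x by simp
qed

end

text \<open>The entry on diagonal 2 is reduced
  modulo \<open>2nk + 1\<close> into \<open>[-nk, nk]\<close>, which turns the kernel row sum \<open>2nk + 1\<close> into \<open>0\<close>.\<close>

definition heffter_entry :: "nat \<Rightarrow> nat \<Rightarrow> int \<Rightarrow> nat \<Rightarrow> int" where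
  "heffter_entry n k i t =
    (if t = 0 then int n * int k - 2 * int n + 1 - half n + halve n i + (- (i + 2)) mod int n
     else if t = 1 then int n - halve n i + halve n (i + 2) - (- (i + 2)) mod int n
     else if t = 2 then
       (if 3 * int n - 1 - 2 * halve n (i + 2) \<le> 2 * int n
        then int n * int k - 2 * int n + 3 * int n - 1 - 2 * halve n (i + 2)
        else int n * int k - 2 * int n + 3 * int n - 1 - 2 * halve n (i + 2)
               - (2 * int n * int k + 1))
     else if t = 3 then - (int n + 1) + halve n (i + 2) - halve n (i + 4) - (- (i + 5)) mod int n
     else if t = 4 then 3 * half n + 3 + halve n (i + 4) + (- (i + 5)) mod int n
     else if (t - 5) mod 4 = 0 then 3 * int n + 4 * int n * int ((t - 5) div 4) + 1 + i mod int n
     else if (t - 5) mod 4 = 1 then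
       - (3 * int n + 4 * int n * int ((t - 5) div 4) + int n + 1 + i mod int n)
     else if (t - 5) mod 4 = 2 then
       - (3 * int n + 4 * int n * int ((t - 5) div 4) + 2 * int n + 1 + (i + 2) mod int n)
     else 3 * int n + 4 * int n * int ((t - 5) div 4) + 3 * int n + 1 + (i + 2) mod int n)"

lemma heffter_entry_mod: "heffter_entry n k (i mod int n) t = heffter_entry n k i t"
proof -
  have "halve n (i mod int n + c) = halve n (i + c)" for c
    by (metis mod_add_left_eq halve_mod)
  moreover have "(- (i mod int n + c)) mod int n = (- (i + c)) mod int n" for c
    by (metis mod_add_left_eq mod_minus_eq)
  moreover have "(i mod int n + c) mod int n = (i + c) mod int n" for c
    by (simp add: mod_add_left_eq)
  ultimately show ?thesis unfolding heffter_entry_def by (simp only: halve_mod mod_mod_trivial)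
qed

lemma sum_lessThan_four: "(\<Sum>t<4. f t) = f 0 + f 1 + f 2 + (f (3::nat) :: int)"
  by (simp add: numeral_eq_Suc)

lemma sum_lessThan_five: "(\<Sum>t<5. f t) = f 0 + f 1 + f 2 + f 3 + (f (4::nat) :: int)"
  by (simp add: numeral_eq_Suc)

lemma sum_lessThan_five_plus_four:
  fixes f :: "nat \<Rightarrow> int"
  shows "(\<Sum>t<5 + 4 * m. f t) = (\<Sum>t<5. f t) + (\<Sum>r<m. \<Sum>s<4. f (5 + 4 * r + s))"
  by (induction m) (simp_all add: numeral_eq_Suc add_ac)

lemma heffter_entry_gadget:
  fixes n r s :: nat
  assumes "s < 4"
  defines "a \<equiv> 3 * int n + 4 * int n * int r + 1"
  shows "heffter_entry n k i (5 + 4 * r + s) =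
    (if s = 0 then a + i mod int n
     else if s = 1 then - (a + int n + i mod int n)
     else if s = 2 then - (a + 2 * int n + (i + 2) mod int n)
     else a + 3 * int n + (i + 2) mod int n)"
proof -
  define t where "t = 5 + 4 * r + s"
  have "5 \<le> t" "(t - 5) div 4 = r" "(t - 5) mod 4 = s" using assms(1) by (auto simp: t_def)
  thus ?thesis unfolding t_def[symmetric] heffter_entry_def a_def by simp
qed

lemma gadget_row_sum: "(\<Sum>s<4. heffter_entry n k i (5 + 4 * r + s)) = 0"
  using heffter_entry_gadget[where s = 0] heffter_entry_gadget[where s = 1]
    heffter_entry_gadget[where s = 2] heffter_entry_gadget[where s = 3]
  unfolding sum_lessThan_four by simp

text \<open>Along a column the row index drops by one from diagonal to diagonal, which the shift
  by 2 on the last two entries of a gadget compensates.\<close>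

lemma gadget_col_sum: "(\<Sum>s<4. heffter_entry n k (j - int (5 + 4 * r + s)) (5 + 4 * r + s)) = 0"
proof -
  define x where "x = j - 5 - 4 * int r"
  have "j - int (5 + 4 * r + 0) = x" "j - int (5 + 4 * r + 1) = x - 1"
    "j - int (5 + 4 * r + 2) = x - 2" "j - int (5 + 4 * r + 3) = x - 3"
    unfolding x_def by simp_all
  thus ?thesis
    using heffter_entry_gadget[where s = 0] heffter_entry_gadget[where s = 1]
      heffter_entry_gadget[where s = 2] heffter_entry_gadget[where s = 3]
    unfolding sum_lessThan_four by (simp only:) simp
qed

definition entry_block :: "nat \<Rightarrow> nat \<Rightarrow> nat" where
  "entry_block k t =
    (if t = 0 then k - 2 else if t = 1 then 0 else if t = 2 then k - 1
     else if t = 3 then 1 else if t = 4 then 2 else t - 2)"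

lemma inj_on_entry_block: "5 \<le> k \<Longrightarrow> inj_on (entry_block k) {..<k}"
  unfolding inj_on_def entry_block_def by auto

lemma entry_block_less: "5 \<le> k \<Longrightarrow> t < k \<Longrightarrow> entry_block k t < k"
  unfolding entry_block_def by auto

lemma kernel_or_gadget_cases:
  fixes t :: nat
  obtains "t < 5" | r s where "t = 5 + 4 * r + s" "s < 4"
proof (cases "t < 5")
  case False
  hence "t = 5 + 4 * ((t - 5) div 4) + (t - 5) mod 4" by presburger
  thus ?thesis by (rule that(2)) simp
qed

context
  fixes n k :: nat
  assumes odd: "odd n" and n3: "3 \<le> n"
begin

private lemma one_le_half: "1 \<le> half n"
  using odd_eq_double_half[OF odd] n3 by linarith

private lemma n_eq: "int n = 2 * half n + 1"
  using odd_eq_double_half[OF odd] .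

private lemma halve_bounds_n: "0 \<le> halve n y \<and> halve n y < int n"
  using halve_bounds n3 by simp

lemma heffter_entry_diag0:
  "heffter_entry n k i 0 = int n * int k - 2 * int n +
     (if halve n i < half n then half n - halve n i else 3 * half n + 1 - halve n i)"
proof -
  have "(- (i + 2)) mod int n = (- 2 * halve n i - 2) mod int n"
    by (rule neg_mod_eq_halve[OF odd])
  also have "\<dots> = (if halve n i < half n then int n - 2 * halve n i - 2
                   else 2 * int n - 2 * halve n i - 2)"
    using neg_double_minus_two_mod_cases[OF n_eq one_le_half, of "halve n i"] halve_bounds_n[of i]
    by simp
  finally show ?thesis unfolding heffter_entry_def using n_eq by auto
qed

lemma heffter_entry_diag1:
  "heffter_entry n k i 1 =
     (if halve n i < half n then 2 * halve n i + 3
      else if halve n i < 2 * half n then 2 * halve n i + 3 - int n else 1)"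
proof -
  have "(- (i + 2)) mod int n = (if halve n i < half n then int n - 2 * halve n i - 2
                                 else 2 * int n - 2 * halve n i - 2)"
    using neg_mod_eq_halve[OF odd, of i 2] halve_bounds_n[of i]
      neg_double_minus_two_mod_cases[OF n_eq one_le_half, of "halve n i"]
    by simp
  moreover have "halve n (i + 2) = (if halve n i < 2 * half n then halve n i + 1 else 0)"
    using halve_add_two[OF odd, of i] succ_mod_cases[OF n_eq one_le_half, of "halve n i"]
      halve_bounds_n[of i]
    by simp
  ultimately show ?thesis unfolding heffter_entry_def using n_eq halve_bounds_n[of i] by auto
qed

lemma abs_heffter_entry_diag2:
  assumes k2: "2 \<le> k"
  shows "\<bar>heffter_entry n k i 2\<bar> = int n * int k - 2 * int n +
           (if half n \<le> halve n (i + 2) then 3 * int n - 1 - 2 * halve n (i + 2)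
            else int n + 2 + 2 * halve n (i + 2))"
proof -
  have "int n * 2 \<le> int n * int k" using k2 by (intro mult_left_mono) auto
  hence P: "2 * int n \<le> int n * int k" by (simp add: mult.commute)
  have c: "(3 * int n - 1 - 2 * halve n (i + 2) \<le> 2 * int n) = (half n \<le> halve n (i + 2))"
    using n_eq by linarith
  have r: "0 \<le> halve n (i + 2)" "halve n (i + 2) < int n" using halve_bounds_n[of "i + 2"] by auto
  have e: "heffter_entry n k i 2 =
    (if half n \<le> halve n (i + 2)
     then int n * int k - 2 * int n + 3 * int n - 1 - 2 * halve n (i + 2)
     else int n * int k - 2 * int n + 3 * int n - 1 - 2 * halve n (i + 2) - (2 * (int n * int k) + 1))"
    unfolding heffter_entry_def by (simp add: c mult.assoc)
  have gen: "\<bar>(if half n \<le> x then Q - 2 * int n + 3 * int n - 1 - 2 * x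
               else Q - 2 * int n + 3 * int n - 1 - 2 * x - (2 * Q + 1))\<bar>
             = Q - 2 * int n + (if half n \<le> x then 3 * int n - 1 - 2 * x else int n + 2 + 2 * x)"
    if "2 * int n \<le> Q" "0 \<le> x" "x < int n" for Q x
    using that by (auto simp: abs_if)
  show ?thesis unfolding e using gen[OF P r] .
qed

lemma abs_heffter_entry_diag3:
  "\<bar>heffter_entry n k i 3\<bar> =
     (if halve n (i + 2) < half n then 2 * int n - 2 * halve n (i + 2) - 1
      else if halve n (i + 2) < 2 * half n then 3 * int n - 2 * halve n (i + 2) - 1 else int n + 1)"
proof -
  have "(- (i + 5)) mod int n =
          (if halve n (i + 2) < half n then int n - 2 * halve n (i + 2) - 3
           else if halve n (i + 2) < 2 * half n then 2 * int n - 2 * halve n (i + 2) - 3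
           else 3 * int n - 2 * halve n (i + 2) - 3)"
    using neg_mod_eq_halve[OF odd, of "i + 2" 3] halve_bounds_n[of "i + 2"]
      neg_double_minus_three_mod_cases[OF n_eq one_le_half, of "halve n (i + 2)"]
    by (simp add: add.assoc)
  moreover have "halve n (i + 4) = (if halve n (i + 2) < 2 * half n then halve n (i + 2) + 1 else 0)"
    using halve_add_two[OF odd, of "i + 2"] halve_bounds_n[of "i + 2"]
      succ_mod_cases[OF n_eq one_le_half, of "halve n (i + 2)"]
    by (simp add: add.assoc)
  ultimately show ?thesis
    unfolding heffter_entry_def using n_eq halve_bounds_n[of "i + 2"] by (auto simp: abs_if)
qed

lemma heffter_entry_diag4:
  "heffter_entry n k i 4 =
     (if halve n (i + 4) \<le> half n then 3 * half n + 2 + int n - halve n (i + 4)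
      else 3 * half n + 2 + 2 * int n - halve n (i + 4))"
proof -
  have "(- (i + 5)) mod int n =
          (if halve n (i + 4) \<le> half n then int n - 2 * halve n (i + 4) - 1
           else 2 * int n - 2 * halve n (i + 4) - 1)"
    using neg_mod_eq_halve[OF odd, of "i + 4" 1] halve_bounds_n[of "i + 4"]
      neg_double_minus_one_mod_cases[OF n_eq one_le_half, of "halve n (i + 4)"]
    by (simp add: add.assoc)
  thus ?thesis unfolding heffter_entry_def by auto
qed

lemma abs_heffter_entry_gadget:
  assumes "s < 4"
  shows "\<bar>heffter_entry n k i (5 + 4 * r + s)\<bar>
           = int n * int (3 + 4 * r + s) + 1 + (if s < 2 then i mod int n else (i + 2) mod int n)"
proof -
  define a where "a = 3 * int n + 4 * int n * int r + 1"
  have pos: "0 < a" "0 \<le> i mod int n" "0 \<le> (i + 2) mod int n" using n3 by (simp_all add: a_def)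
  have rhs: "int n * int (3 + 4 * r + s) + 1 = a + int s * int n" by (simp add: a_def algebra_simps)
  have "s = 0 \<or> s = 1 \<or> s = 2 \<or> s = 3" using assms by linarith
  thus ?thesis
    unfolding heffter_entry_gadget[OF assms, where n = n and r = r and k = k and i = i]
      a_def[symmetric] rhs
    using pos by (elim disjE) simp_all
qed

lemma abs_heffter_entry_kernel_block:
  assumes "t < 5" "2 \<le> k"
  shows "int n * int (entry_block k t) + 1 \<le> \<bar>heffter_entry n k i t\<bar>
           \<and> \<bar>heffter_entry n k i t\<bar> \<le> int n * int (entry_block k t) + int n"
proof -
  have "int n * 2 \<le> int n * int k" using assms(2) by (intro mult_left_mono) auto
  hence P: "2 * int n \<le> int n * int k" by (simp add: mult.commute)
  have K2: "int n * int (k - 2) = int n * int k - 2 * int n" using assms(2) by (simp add: algebra_simps)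
  have K1: "int n * int (k - 1) = int n * int k - 2 * int n + int n"
    using assms(2) by (simp add: algebra_simps)
  consider "t = 0" | "t = 1" | "t = 2" | "t = 3" | "t = 4" using assms(1) by linarith
  thus ?thesis
  proof cases
    case 1
    have g: "\<bar>Q + g\<bar> = Q + g" "1 \<le> g" "g \<le> int n"
      if "0 \<le> Q" "g = (if x < half n then half n - x else 3 * half n + 1 - x)" "0 \<le> x" "x < int n"
      for Q g x
      using that n_eq by auto
    show ?thesis
      using 1 heffter_entry_diag0 g[of "int n * int k - 2 * int n" _ "halve n i"] halve_bounds_n[of i] P K2
      unfolding entry_block_def by auto
  next
    case 2 thus ?thesis
      using heffter_entry_diag1 halve_bounds_n[of i] n_eq unfolding entry_block_def by auto
  next
    case 3 thus ?thesis
      using abs_heffter_entry_diag2[OF assms(2)] halve_bounds_n[of "i + 2"] n_eq K1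
      unfolding entry_block_def by auto
  next
    case 4 thus ?thesis
      using abs_heffter_entry_diag3 halve_bounds_n[of "i + 2"] n_eq unfolding entry_block_def by auto
  next
    case 5 thus ?thesis
      using heffter_entry_diag4 halve_bounds_n[of "i + 4"] n_eq unfolding entry_block_def by auto
  qed
qed

lemma abs_heffter_entry_block:
  assumes "2 \<le> k"
  shows "int n * int (entry_block k t) + 1 \<le> \<bar>heffter_entry n k i t\<bar>
           \<and> \<bar>heffter_entry n k i t\<bar> \<le> int n * int (entry_block k t) + int n"
proof (cases t rule: kernel_or_gadget_cases)
  case 1
  show ?thesis using abs_heffter_entry_kernel_block[OF 1 assms] .
next
  case (2 r s)
  have block: "entry_block k t = 3 + 4 * r + s" using 2 by (simp add: entry_block_def)
  obtain w where "\<bar>heffter_entry n k i t\<bar> = int n * int (3 + 4 * r + s) + 1 + w" "0 \<le> w" "w < int n"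
    using abs_heffter_entry_gadget[OF 2(2), of i r] n3 unfolding 2(1) by (cases "s < 2") auto
  thus ?thesis unfolding block by linarith
qed

lemma abs_heffter_entry_kernel_inj:
  assumes "t < 5" "2 \<le> k" "0 \<le> i" "i < int n" "0 \<le> j" "j < int n"
    and eq: "\<bar>heffter_entry n k i t\<bar> = \<bar>heffter_entry n k j t\<bar>"
  shows "i = j"
proof -
  have rng: "0 \<le> halve n y" "halve n y < int n" for y using halve_bounds_n[of y] by auto
  consider "t = 0" | "t = 1" | "t = 2" | "t = 3" | "t = 4" using assms(1) by linarith
  thus ?thesis
  proof cases
    case 1
    have "int n * 2 \<le> int n * int k" using assms(2) by (intro mult_left_mono) auto
    hence P: "0 \<le> int n * int k - 2 * int n" by (simp add: mult.commute)
    have a: "\<bar>heffter_entry n k y 0\<bar> = int n * int k - 2 * int n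
               + (if halve n y < half n then half n - halve n y else 3 * half n + 1 - halve n y)" for y
      using heffter_entry_diag0[of y] rng[of y] P n_eq by auto
    have "halve n i = halve n j"
      using eq 1 a[of i] a[of j] rng[of i] rng[of j] n_eq by (auto split: if_splits)
    thus ?thesis using halve_add_inj[OF odd assms(3-6), of 0] by simp
  next
    case 2
    have "halve n i = halve n j"
      using eq 2 heffter_entry_diag1[of i] heffter_entry_diag1[of j] rng[of i] rng[of j] n_eq
      by (auto split: if_splits) presburger+
    thus ?thesis using halve_add_inj[OF odd assms(3-6), of 0] by simp
  next
    case 3
    have "halve n (i + 2) = halve n (j + 2)"
      using eq 3 abs_heffter_entry_diag2[OF assms(2), of i] abs_heffter_entry_diag2[OF assms(2), of j]
        rng[of "i + 2"] rng[of "j + 2"] n_eq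
      by (auto split: if_splits) presburger+
    thus ?thesis using halve_add_inj[OF odd assms(3-6), of 2] by simp
  next
    case 4
    have "halve n (i + 2) = halve n (j + 2)"
      using eq 4 abs_heffter_entry_diag3[of i] abs_heffter_entry_diag3[of j]
        rng[of "i + 2"] rng[of "j + 2"] n_eq
      by (auto split: if_splits) presburger+
    thus ?thesis using halve_add_inj[OF odd assms(3-6), of 2] by simp
  next
    case 5
    have a: "\<bar>heffter_entry n k y 4\<bar> = heffter_entry n k y 4" for y
      using heffter_entry_diag4[of y] rng[of "y + 4"] n_eq by auto
    have "halve n (i + 4) = halve n (j + 4)"
      using eq 5 a[of i] a[of j] heffter_entry_diag4[of i] heffter_entry_diag4[of j]
        rng[of "i + 4"] rng[of "j + 4"] n_eq
      by (auto split: if_splits)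
    thus ?thesis using halve_add_inj[OF odd assms(3-6), of 4] by simp
  qed
qed

lemma abs_heffter_entry_gadget_inj:
  assumes "s < 4"
    and eq: "\<bar>heffter_entry n k i (5 + 4 * r + s)\<bar> = \<bar>heffter_entry n k j (5 + 4 * r + s)\<bar>"
  shows "i mod int n = j mod int n"
proof -
  have "i mod int n = j mod int n \<or> (i + 2) mod int n = (j + 2) mod int n"
    using eq abs_heffter_entry_gadget[OF assms(1), of i r]
      abs_heffter_entry_gadget[OF assms(1), of j r]
    by (auto split: if_splits)
  thus ?thesis
  proof
    assume "(i + 2) mod int n = (j + 2) mod int n"
    hence "((i + 2) - 2) mod int n = ((j + 2) - 2) mod int n" by (rule mod_diff_cong) simp
    thus ?thesis by simp
  qed
qed

lemma inj_on_abs_heffter_entry: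
  assumes "2 \<le> k" shows "inj_on (\<lambda>i. \<bar>heffter_entry n k (int i) t\<bar>) {..<n}"
proof (rule inj_onI)
  fix i j assume ij: "i \<in> {..<n}" "j \<in> {..<n}"
    and eq: "\<bar>heffter_entry n k (int i) t\<bar> = \<bar>heffter_entry n k (int j) t\<bar>"
  show "i = j"
  proof (cases t rule: kernel_or_gadget_cases)
    case 1
    thus ?thesis using abs_heffter_entry_kernel_inj[OF 1 assms _ _ _ _ eq] ij by simp
  next
    case (2 r s)
    thus ?thesis using abs_heffter_entry_gadget_inj[where i = "int i" and j = "int j"] eq ij
      by (simp add: zmod_int[symmetric])
  qed
qed

lemma kernel_row_sum:
  "(\<Sum>t<5. heffter_entry n k i t) = 2 * int n * int k + 1 -
     (if 3 * int n - 1 - 2 * halve n (i + 2) \<le> 2 * int n then 0 else 2 * int n * int k + 1)"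
  unfolding sum_lessThan_five heffter_entry_def using n_eq by simp

lemma kernel_col_sum:
  "(\<Sum>t<5. heffter_entry n k (j - int t) t) = 2 * int n * int k + 1 -
     (if 3 * int n - 1 - 2 * halve n j \<le> 2 * int n then 0 else 2 * int n * int k + 1)"
  unfolding sum_lessThan_five heffter_entry_def using n_eq by (simp add: algebra_simps)

lemma heffter_entry_row_sum:
  assumes "k = 5 + 4 * m"
  shows "(\<Sum>t<k. heffter_entry n k i t) mod (2 * int n * int k + 1) = 0"
proof -
  have "(\<Sum>t<k. heffter_entry n k i t)
          = (\<Sum>t<5. heffter_entry n k i t) + (\<Sum>r<m. \<Sum>s<4. heffter_entry n k i (5 + 4 * r + s))"
    unfolding assms by (rule sum_lessThan_five_plus_four)
  also have "\<dots> = (\<Sum>t<5. heffter_entry n k i t)" using gadget_row_sum by simp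
  finally show ?thesis using kernel_row_sum by simp
qed

lemma heffter_entry_col_sum:
  assumes "k = 5 + 4 * m"
  shows "(\<Sum>t<k. heffter_entry n k (j - int t) t) mod (2 * int n * int k + 1) = 0"
proof -
  have "(\<Sum>t<k. heffter_entry n k (j - int t) t)
          = (\<Sum>t<5. heffter_entry n k (j - int t) t)
            + (\<Sum>r<m. \<Sum>s<4. heffter_entry n k (j - int (5 + 4 * r + s)) (5 + 4 * r + s))"
    unfolding assms by (rule sum_lessThan_five_plus_four)
  also have "\<dots> = (\<Sum>t<5. heffter_entry n k (j - int t) t)" using gadget_col_sum by simp
  finally show ?thesis using kernel_col_sum by simp
qed

lemma bij_betw_abs_heffter_entry:
  assumes "5 \<le> k"
  shows "bij_betw (\<lambda>(i, t). \<bar>heffter_entry n k (int i) t\<bar>) ({..<n} \<times> {..<k}) {1..int (n * k)}"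
proof (rule bij_betw_blocks[OF inj_on_entry_block[OF assms] entry_block_less[OF assms]])
  fix i t
  show "int n * int (entry_block k t) + 1 \<le> (\<lambda>(i, t). \<bar>heffter_entry n k (int i) t\<bar>) (i, t)
          \<and> (\<lambda>(i, t). \<bar>heffter_entry n k (int i) t\<bar>) (i, t) \<le> int n * int (entry_block k t) + int n"
    using abs_heffter_entry_block[of t "int i"] assms by simp
  show "inj_on (\<lambda>i. (\<lambda>(i, t). \<bar>heffter_entry n k (int i) t\<bar>) (i, t)) {..<n}"
    using inj_on_abs_heffter_entry[of t] assms by simp
qed

end

theorem theorem6p2:
  fixes n k :: nat
  assumes "n mod 4 = 1" and "k mod 4 = 1" and "5 \<le> k" and "k < n"
  shows "\<exists>A. heffter n k A"
proof
  have n: "odd n" "3 \<le> n" using assms(1,3,4) by presburger+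
  obtain m where m: "k = 5 + 4 * m"
    using assms(2,3) by (intro that[of "(k - 5) div 4"]) presburger
  show "heffter n k (diagonal_array n k (heffter_entry n k))"
    by (rule heffter_diagonal_array[OF _ heffter_entry_mod bij_betw_abs_heffter_entry[OF n assms(3)]])
      (use assms heffter_entry_row_sum[OF n m] heffter_entry_col_sum[OF n m] in auto)
qed

end
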